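(* Let $G$ be a finite simple graph with $V(G)=\{1,\dots,n\}$, vertex weight function $w_1$, and an edge weight function $w$ taking only positive real values. Then $G$ is a forest if and only if $\phi_{(w,w_1)}(G,x)=\eta_{(w,w_1)}(G,x)$.
   Context: A vertex weight function $w_1$ assigns a real number (possibly $0$) to each vertex; induced subgraphs carry restricted weights. For $A\subseteq E(G)$, $w(A)=\prod_{e\in A}w(e)$. $\mu_w(G,x)=\sum_{M}(-1)^{|M|}|w(M)|^2x^{n-2|M|}$ over all matchings $M$ (including empty). $\eta_{(w,w_1)}(G,x)=\sum_{S\subseteq V(G)}(-1)^{|V(G)\setminus S|}\big(\prod_{v\in V(G)\setminus S}w_1(v)\big)\mu_w(G[S],x)$ with $G[S]$ the induced subgraph and $\mu_w$ of the empty graph equal to $1$. The weighted adjacency matrix $B=[b_{uv}]$ has $b_{uv}=w(e_{uv})$ if $uv$ is an edge and $u<v$, $b_{uu}=w_1(u)$, $b_{uv}=\overline{w(e_{vu})}$ if $vu$ is an edge and $u>v$, and $0$ otherwise; $\phi_{(w,w_1)}(G,x)=\det(xI-B)$. *)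

theory Defs
  imports "Jordan_Normal_Form.Char_Poly"
begin

definition simple_graph :: "nat \<Rightarrow> nat set set \<Rightarrow> bool" where
  "simple_graph n E \<longleftrightarrow> (\<forall>e\<in>E. e \<subseteq> {1..n} \<and> card e = 2)"

definition is_cycle :: "nat \<Rightarrow> nat set set \<Rightarrow> nat list \<Rightarrow> bool" where
  "is_cycle n E vs \<longleftrightarrow> length vs \<ge> 3 \<and> distinct vs \<and> set vs \<subseteq> {1..n} \<and>
     (\<forall>i < length vs. {vs ! i, vs ! ((i + 1) mod length vs)} \<in> E)"

definition is_forest :: "nat \<Rightarrow> nat set set \<Rightarrow> bool" where
  "is_forest n E \<longleftrightarrow> \<not> (\<exists>vs. is_cycle n E vs)"

definition induced_edges :: "nat set set \<Rightarrow> nat set \<Rightarrow> nat set set" where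
  "induced_edges E S = {e \<in> E. e \<subseteq> S}"

definition is_matching :: "nat set set \<Rightarrow> nat set set \<Rightarrow> bool" where
  "is_matching F M \<longleftrightarrow> M \<subseteq> F \<and> (\<forall>e\<in>M. \<forall>f\<in>M. e \<noteq> f \<longrightarrow> e \<inter> f = {})"

definition mu_poly :: "nat set set \<Rightarrow> (nat set \<Rightarrow> real) \<Rightarrow> nat set \<Rightarrow> real poly" where
  "mu_poly E w S = (\<Sum>M \<in> {M. is_matching (induced_edges E S) M}.
      monom ((-1) ^ card M * \<bar>\<Prod>e\<in>M. w e\<bar> ^ 2) (card S - 2 * card M))"

definition eta_poly :: "nat \<Rightarrow> nat set set \<Rightarrow> (nat set \<Rightarrow> real) \<Rightarrow> (nat \<Rightarrow> real) \<Rightarrow> real poly" where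
  "eta_poly n E w w1 = (\<Sum>S \<in> Pow {1..n}.
      Polynomial.smult ((-1) ^ card ({1..n} - S) * (\<Prod>v \<in> {1..n} - S. w1 v)) (mu_poly E w S))"

text \<open>Weighted adjacency matrix; row/column index i (0-based) corresponds to vertex i+1.
  Edge weights are real here, so the conjugate below the diagonal equals the weight itself.\<close>
definition wadj_mat :: "nat \<Rightarrow> nat set set \<Rightarrow> (nat set \<Rightarrow> real) \<Rightarrow> (nat \<Rightarrow> real) \<Rightarrow> real mat" where
  "wadj_mat n E w w1 = mat n n (\<lambda>(i, j).
      if i = j then w1 (i + 1)
      else if {i + 1, j + 1} \<in> E then w {i + 1, j + 1} else 0)"

definition phi_poly :: "nat \<Rightarrow> nat set set \<Rightarrow> (nat set \<Rightarrow> real) \<Rightarrow> (nat \<Rightarrow> real) \<Rightarrow> real poly" where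
  "phi_poly n E w w1 = char_poly (wadj_mat n E w w1)"

end

theory Submission
  imports Defs "HOL-Combinatorics.Cycles"
begin

text \<open>Expand \<open>\<phi> = det (xI - B)\<close> by the Leibniz formula. A permutation contributes only if
  each non-fixed point \<open>i\<close> is joined to \<open>p i\<close> by an edge. Involutions of this kind correspond
  exactly to the matchings of \<open>G\<close>, and their contributions add up to \<open>\<eta>\<close>; hence
  \<open>\<phi> - \<eta>\<close> is the sum over the remaining permutations, each of which has an orbit of length at
  least 3, i.e. a cycle of \<open>G\<close>. So \<open>\<phi> = \<eta>\<close> for forests. Conversely, if \<open>g\<close> is the girth of
  \<open>G\<close>, every such permutation moves at least \<open>g\<close> points, and those moving exactly \<open>g\<close> points are
  the \<open>g\<close>-cycles of \<open>G\<close>, contributing \<open>-\<Prod>w(e) < 0\<close> to the coefficient of \<open>x ^ (n - g)\<close> in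
  \<open>\<phi> - \<eta>\<close>; all other contributions to it are \<open>\<le> 0\<close>.\<close>

lemma sign_cycle_of_list:
  "distinct cs \<Longrightarrow> cs \<noteq> [] \<Longrightarrow> sign (cycle_of_list cs) = (-1) ^ (length cs - 1)"
proof (induction cs rule: cycle_of_list.induct)
  case (1 i j cs)
  have "sign (cycle_of_list (i # j # cs)) = sign (transpose i j) * sign (cycle_of_list (j # cs))"
    by (simp add: sign_compose permutation_swap_id permutation_of_cycle)
  also have "\<dots> = - ((-1) ^ (length (j # cs) - 1))"
    using 1 by (simp add: sign_swap_id)
  finally show ?case by (simp add: o_def)
qed auto

lemma sign_involution:
  assumes "finite {x. p x \<noteq> x}" and "\<And>x. p (p x) = x"
  shows "sign p = (-1) ^ (card {x. p x \<noteq> x} div 2)"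
  using assms
proof (induction "card {x. p x \<noteq> x}" arbitrary: p rule: less_induct)
  case less
  show ?case
  proof (cases "{x. p x \<noteq> x} = {}")
    case True
    then have "p = id" by auto
    then show ?thesis using True by simp
  next
    case False
    then obtain a where a: "p a \<noteq> a" by auto
    define b where "b = p a"
    have pb: "p b = a" and ab: "a \<noteq> b" using less.prems a by (auto simp: b_def)
    define q where "q = transpose a b \<circ> p"
    have q: "q x = (if x = a \<or> x = b then x else p x)" for x
      using less.prems(2) pb ab unfolding q_def b_def by (auto simp: transpose_def) metis+
    have supp_q: "{x. q x \<noteq> x} = {x. p x \<noteq> x} - {a, b}"
      using q a pb b_def by auto
    have ab_supp: "{a, b} \<subseteq> {x. p x \<noteq> x}" using a pb ab by auto
    have "2 \<le> card {x. p x \<noteq> x}"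
      using card_mono[OF less.prems(1) ab_supp] ab by simp
    then have card_q: "card {x. q x \<noteq> x} + 2 = card {x. p x \<noteq> x}"
      unfolding supp_q using ab_supp ab less.prems(1) by (simp add: card_Diff_subset)
    have fin_q: "finite {x. q x \<noteq> x}" unfolding supp_q using less.prems(1) by simp
    have inv_q: "q (q x) = x" for x using q less.prems(2) by (metis b_def pb)
    have "permutation q"
      using fin_q involuntory_imp_bij[of q] inv_q by (simp add: permutation)
    moreover have "p = transpose a b \<circ> q" unfolding q_def by (simp add: fun_eq_iff)
    ultimately have "sign p = - sign q"
      by (simp add: sign_compose permutation_swap_id sign_swap_id ab)
    also have "sign q = (-1) ^ (card {x. q x \<noteq> x} div 2)"
      using less.hyps[OF _ fin_q inv_q] card_q by simp
    finally show ?thesis by (simp flip: card_q)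
  qed
qed

lemma cycle_of_list_nth:
  assumes "distinct cs" and "k < length cs"
  shows "cycle_of_list cs (cs ! k) = cs ! (Suc k mod length cs)"
proof -
  have "cycle_of_list cs (cs ! k) = map (cycle_of_list cs) cs ! k" using assms(2) by simp
  also have "\<dots> = rotate1 cs ! k" using cyclic_rotation[OF assms(1), of 1] by simp
  finally show ?thesis using assms(2) by (simp add: nth_rotate1)
qed

lemma support_nth_succ:
  assumes "permutation p" and "k < length (support p a)"
  shows "p (support p a ! k) = support p a ! (Suc k mod length (support p a))"
  using cycle_restrict[OF assms(1) nth_mem[OF assms(2)]]
    cycle_of_list_nth[OF cycle_of_permutation[OF assms(1)] assms(2)] by simp

lemma length_support_ge_3:
  assumes "permutation p" and "p (p a) \<noteq> a"
  shows "3 \<le> length (support p a)"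
proof -
  have "p a \<noteq> a" using assms(2) by auto
  then have "least_power p a > 1" using least_power_gt_one[OF assms(1)] by simp
  moreover have "least_power p a \<noteq> 2"
    using least_power_of_permutation(1)[OF assms(1), of a] assms(2)
    by (auto simp: numeral_2_eq_2)
  ultimately show ?thesis by simp
qed

lemma cyclic_succ_not_fixed:
  assumes "distinct cs" and "2 \<le> length cs"
    and succ: "\<And>k. k < length cs \<Longrightarrow> p (cs ! k) = cs ! (Suc k mod length cs)"
    and "x \<in> set cs"
  shows "p x \<noteq> x"
proof -
  obtain k where k: "k < length cs" "x = cs ! k" using assms(4) by (auto simp: in_set_conv_nth)
  have "Suc k mod length cs \<noteq> k"
  proof (cases "Suc k < length cs")
    case False
    then have "Suc k = length cs" using k(1) by simp
    then show ?thesis using assms(2) by simp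
  qed simp
  moreover have "Suc k mod length cs < length cs"
    using k(1) by (intro mod_less_divisor) linarith
  ultimately show ?thesis using assms(1) k succ[OF k(1)] by (simp add: nth_eq_iff_index_eq)
qed

lemma sign_single_cycle_perm:
  assumes perm: "permutation p" and "{x. p x \<noteq> x} \<subseteq> set (support p a)"
  shows "sign p = (-1) ^ (length (support p a) - 1)"
proof -
  have cycle: "cycle_of_list (support p a) = p"
  proof
    fix x show "cycle_of_list (support p a) x = p x"
    proof (cases "x \<in> set (support p a)")
      case True then show ?thesis by (rule cycle_restrict[OF perm, symmetric])
    next
      case False
      then have "p x = x" using assms(2) by blast
      then show ?thesis using id_outside_supp[OF False] by simp
    qed
  qed
  have "support p a \<noteq> []" using least_power_of_permutation(2)[OF perm] by simp
  from sign_cycle_of_list[OF cycle_of_permutation[OF perm] this] show ?thesis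
    unfolding cycle .
qed

lemma prod_linear_expand:
  fixes c :: "'a \<Rightarrow> 'b::comm_ring_1"
  assumes "finite A"
  shows "(\<Prod>v\<in>A. [:-c v, 1:]) =
    (\<Sum>T\<in>Pow A. monom ((-1) ^ card (A - T) * (\<Prod>v\<in>A - T. c v)) (card T))"
proof -
  have "(\<Prod>v\<in>A. [:-c v, 1:]) = (\<Prod>v\<in>A. monom 1 1 + [:-c v:])"
    by (intro prod.cong) (auto simp: monom_altdef)
  also have "\<dots> = (\<Sum>T\<in>Pow A. prod (\<lambda>_. monom 1 1) T * prod (\<lambda>v. [:-c v:]) (A - T))"
    by (rule prod_add[OF assms])
  also have "\<dots> = (\<Sum>T\<in>Pow A. monom ((-1) ^ card (A - T) * (\<Prod>v\<in>A - T. c v)) (card T))"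
    by (simp add: monom_power prod_uminus prod_to_poly mult.commute smult_monom)
  finally show ?thesis .
qed

lemma sum_supersets_eq_prod_linear:
  fixes c :: "'a \<Rightarrow> 'b::comm_ring_1"
  assumes "finite V" and "U \<subseteq> V"
  shows "(\<Sum>S | S \<in> Pow V \<and> U \<subseteq> S.
           monom ((-1) ^ card (V - S) * (\<Prod>v\<in>V - S. c v)) (card S - card U)) =
         (\<Prod>v\<in>V - U. [:-c v, 1:])"
proof -
  have bij: "bij_betw (\<lambda>T. U \<union> T) (Pow (V - U)) {S. S \<in> Pow V \<and> U \<subseteq> S}"
    by (rule bij_betw_byWitness[where f'="\<lambda>S. S - U"]) (use assms(2) in auto)
  have card: "card (U \<union> T) - card U = card T" if "T \<subseteq> V - U" for T
    using that assms by (subst card_Un_disjoint) (auto intro: finite_subset)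
  have diff: "V - (U \<union> T) = (V - U) - T" for T by auto
  have "(\<Sum>S | S \<in> Pow V \<and> U \<subseteq> S.
           monom ((-1) ^ card (V - S) * (\<Prod>v\<in>V - S. c v)) (card S - card U)) =
        (\<Sum>T\<in>Pow (V - U). monom ((-1) ^ card (V - (U \<union> T)) * (\<Prod>v\<in>V - (U \<union> T). c v))
           (card (U \<union> T) - card U))"
    by (rule sum.reindex_bij_betw[OF bij, symmetric])
  also have "\<dots> = (\<Sum>T\<in>Pow (V - U).
      monom ((-1) ^ card ((V - U) - T) * (\<Prod>v\<in>(V - U) - T. c v)) (card T))"
    by (intro sum.cong refl) (simp add: card diff)
  also have "\<dots> = (\<Prod>v\<in>V - U. [:-c v, 1:])"
    by (rule prod_linear_expand[symmetric]) (use assms(1) in simp)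
  finally show ?thesis .
qed

lemma
  fixes c :: "'a \<Rightarrow> 'b::idom"
  assumes "finite A"
  shows degree_prod_linear: "degree (\<Prod>i\<in>A. [:c i, 1:]) = card A"
    and coeff_prod_linear_card: "coeff (\<Prod>i\<in>A. [:c i, 1:]) (card A) = 1"
proof -
  show deg: "degree (\<Prod>i\<in>A. [:c i, 1:]) = card A"
    by (subst degree_prod_eq_sum_degree) auto
  have "lead_coeff (\<Prod>i\<in>A. [:c i, 1:]) = 1" by (simp add: lead_coeff_prod)
  then show "coeff (\<Prod>i\<in>A. [:c i, 1:]) (card A) = 1" using deg by simp
qed

lemma simple_graph_finite:
  assumes "simple_graph n E" shows "finite E"
proof -
  have "E \<subseteq> Pow {1..n}" using assms unfolding simple_graph_def by auto
  then show ?thesis by (rule finite_subset) simp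
qed

lemma simple_graph_edgeD:
  assumes "simple_graph n E" and "{a, b} \<in> E"
  shows "a \<noteq> b" and "1 \<le> a" and "a \<le> n"
  using assms unfolding simple_graph_def by fastforce+

lemma simple_graph_edgeE:
  assumes "simple_graph n E" and "e \<in> E"
  obtains a b where "e = {a + 1, b + 1}" and "a \<noteq> b" and "a < n" and "b < n"
proof -
  have "e \<subseteq> {1..n}" and "card e = 2" using assms unfolding simple_graph_def by auto
  then obtain x y where "e = {x, y}" "x \<noteq> y" "1 \<le> x" "x \<le> n" "1 \<le> y" "y \<le> n"
    by (auto simp: card_2_iff)
  then show ?thesis using that[of "x - 1" "y - 1"] by auto
qed

lemma is_matching_induced_edges_iff:
  "is_matching (induced_edges E S) M \<longleftrightarrow> is_matching E M \<and> \<Union>M \<subseteq> S"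
  unfolding is_matching_def induced_edges_def by auto

lemma
  assumes "simple_graph n E" and "is_matching E M"
  shows card_Union_matching: "card (\<Union>M) = 2 * card M"
    and Union_matching_subset: "\<Union>M \<subseteq> {1..n}"
proof -
  have edges: "e \<subseteq> {1..n} \<and> card e = 2" if "e \<in> M" for e
    using assms that unfolding simple_graph_def is_matching_def by auto
  then show "\<Union>M \<subseteq> {1..n}" by auto
  then have "finite M" by (meson finite_UnionD finite_atLeastAtMost finite_subset)
  have "card (\<Union>M) = sum card M"
    using assms(2) edges by (intro card_Union_disjoint)
      (auto simp: is_matching_def disjnt_def pairwise_def intro: card_ge_0_finite)
  also have "\<dots> = 2 * card M" using edges by simp
  finally show "card (\<Union>M) = 2 * card M" .
qed

definition matching_term :: "nat \<Rightarrow> (nat set \<Rightarrow> real) \<Rightarrow> (nat \<Rightarrow> real) \<Rightarrow> nat set set \<Rightarrow> real poly"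
  where "matching_term n w w1 M =
    Polynomial.smult ((-1) ^ card M * \<bar>\<Prod>e\<in>M. w e\<bar> ^ 2) (\<Prod>v\<in>{1..n} - \<Union>M. [:-w1 v, 1:])"

lemma eta_poly_eq_sum_matchings:
  assumes sg: "simple_graph n E"
  shows "eta_poly n E w w1 = (\<Sum>M | is_matching E M. matching_term n w w1 M)"
proof -
  define V where "V = {1..n::nat}"
  define c where "c S = (-1) ^ card (V - S) * (\<Prod>v\<in>V - S. w1 v)" for S
  define d where "d M = (-1) ^ card M * \<bar>\<Prod>e\<in>M. w e\<bar> ^ 2" for M :: "nat set set"
  define g where "g S M = monom (c S * d M) (card S - 2 * card M)" for S M
  have finE: "finite E" by (rule simple_graph_finite[OF sg])
  have matchings: "{M. is_matching F M} = {M \<in> Pow E. is_matching F M}" if "F \<subseteq> E" for F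
    using that unfolding is_matching_def by auto
  have "eta_poly n E w w1 =
      (\<Sum>S\<in>Pow V. \<Sum>M | M \<in> Pow E \<and> is_matching (induced_edges E S) M. g S M)"
    unfolding eta_poly_def mu_poly_def V_def[symmetric] c_def[symmetric] g_def d_def
    by (simp add: smult_sum2 smult_monom matchings induced_edges_def)
  also have "\<dots> = (\<Sum>M\<in>Pow E. \<Sum>S | S \<in> Pow V \<and> is_matching E M \<and> \<Union>M \<subseteq> S. g S M)"
    by (subst sum.swap_restrict) (auto simp: V_def finE is_matching_induced_edges_iff)
  also have "\<dots> = (\<Sum>M | M \<in> Pow E \<and> is_matching E M. \<Sum>S | S \<in> Pow V \<and> \<Union>M \<subseteq> S. g S M)"
    using finE by (simp only: sum.inter_filter finite_Pow_iff) (intro sum.cong; simp)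
  also have "\<dots> = (\<Sum>M | is_matching E M. matching_term n w w1 M)"
  proof (rule sum.cong)
    fix M assume "M \<in> {M. is_matching E M}"
    then have M: "is_matching E M" by simp
    have "(\<Sum>S | S \<in> Pow V \<and> \<Union>M \<subseteq> S. g S M) =
        Polynomial.smult (d M) (\<Sum>S | S \<in> Pow V \<and> \<Union>M \<subseteq> S. monom (c S) (card S - card (\<Union>M)))"
      by (simp add: g_def smult_sum2 smult_monom card_Union_matching[OF sg M] mult.commute)
    also have "\<dots> = matching_term n w w1 M"
      using sum_supersets_eq_prod_linear[OF _ Union_matching_subset[OF sg M], of w1]
      unfolding matching_term_def c_def d_def V_def by simp
    finally show "(\<Sum>S | S \<in> Pow V \<and> \<Union>M \<subseteq> S. g S M) = matching_term n w w1 M" .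
  qed (use matchings in auto)
  finally show ?thesis .
qed

section \<open>The Leibniz expansion of \<open>\<phi>\<close>\<close>

definition char_entry :: "nat set set \<Rightarrow> (nat set \<Rightarrow> real) \<Rightarrow> (nat \<Rightarrow> real) \<Rightarrow> nat \<Rightarrow> nat \<Rightarrow> real poly"
  where "char_entry E w w1 i j =
    (if i = j then [:-w1 (i + 1), 1:] else [:-(if {i + 1, j + 1} \<in> E then w {i + 1, j + 1} else 0):])"

definition leibniz_term ::
    "nat \<Rightarrow> nat set set \<Rightarrow> (nat set \<Rightarrow> real) \<Rightarrow> (nat \<Rightarrow> real) \<Rightarrow> (nat \<Rightarrow> nat) \<Rightarrow> real poly"
  where "leibniz_term n E w w1 p = of_int (sign p) * (\<Prod>i = 0..<n. char_entry E w w1 i (p i))"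

lemma wadj_mat_carrier: "wadj_mat n E w w1 \<in> carrier_mat n n"
  by (simp add: wadj_mat_def)

lemma char_poly_matrix_wadj_mat_index:
  assumes "i < n" and "j < n"
  shows "char_poly_matrix (wadj_mat n E w w1) $$ (i, j) = char_entry E w w1 i j"
  using assms wadj_mat_carrier[of n E w w1]
  by (cases "i = j") (auto simp: char_poly_matrix_def char_entry_def wadj_mat_def)

lemma phi_poly_eq_sum_leibniz:
  "phi_poly n E w w1 = (\<Sum>p | p permutes {0..<n}. leibniz_term n E w w1 p)"
  unfolding phi_poly_def char_poly_def det_def'[OF char_poly_matrix_closed[OF wadj_mat_carrier]]
    leibniz_term_def
proof (intro sum.cong refl arg_cong2[where f = "(*)"] prod.cong)
  fix p i assume "p \<in> {p. p permutes {0..<n}}" and "i \<in> {0..<n}"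
  then show "char_poly_matrix (wadj_mat n E w w1) $$ (i, p i) = char_entry E w w1 i (p i)"
    by (auto intro!: char_poly_matrix_wadj_mat_index dest: permutes_in_image[of p _ i])
qed

abbreviation moved_points :: "nat \<Rightarrow> (nat \<Rightarrow> nat) \<Rightarrow> nat set"
  where "moved_points n p \<equiv> {i. i < n \<and> p i \<noteq> i}"

definition edge_supported :: "nat \<Rightarrow> nat set set \<Rightarrow> (nat \<Rightarrow> nat) \<Rightarrow> bool"
  where "edge_supported n E p \<longleftrightarrow> (\<forall>i < n. p i \<noteq> i \<longrightarrow> {i + 1, p i + 1} \<in> E)"

lemma leibniz_term_eq_0: "\<not> edge_supported n E p \<Longrightarrow> leibniz_term n E w w1 p = 0"
  unfolding edge_supported_def leibniz_term_def by (auto intro!: prod_zero simp: char_entry_def)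

lemma leibniz_term_edge_supported:
  assumes "edge_supported n E p"
  shows "leibniz_term n E w w1 p =
    Polynomial.smult (of_int (sign p) * (\<Prod>i\<in>moved_points n p. - w {i + 1, p i + 1}))
      (\<Prod>i | i < n \<and> p i = i. [:-w1 (i + 1), 1:])"
proof -
  have "(\<Prod>i = 0..<n. char_entry E w w1 i (p i)) =
      (\<Prod>i = 0..<n. if p i = i then [:-w1 (i + 1), 1:] else [:- w {i + 1, p i + 1}:])"
    using assms unfolding edge_supported_def char_entry_def by (intro prod.cong) auto
  also have "\<dots> = (\<Prod>i | i < n \<and> p i = i. [:-w1 (i + 1), 1:]) *
      (\<Prod>i\<in>moved_points n p. [:- w {i + 1, p i + 1}:])"
    by (subst prod.If_cases) (auto intro!: arg_cong2[where f = "(*)"] prod.cong)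
  finally show ?thesis
    unfolding leibniz_term_def by (simp add: prod_to_poly of_int_poly mult.commute)
qed

section \<open>Edge-supported involutions and matchings\<close>

definition perm_edges :: "nat \<Rightarrow> (nat \<Rightarrow> nat) \<Rightarrow> nat set set"
  where "perm_edges n p = (\<lambda>i. {i + 1, p i + 1}) ` moved_points n p"

definition matching_perm :: "nat set set \<Rightarrow> nat \<Rightarrow> nat"
  where "matching_perm M i = (if \<exists>j. {i + 1, j + 1} \<in> M then THE j. {i + 1, j + 1} \<in> M else i)"

lemma matching_perm_eqI:
  assumes sg: "simple_graph n E" and M: "is_matching E M" and e: "{i + 1, j + 1} \<in> M"
  shows "matching_perm M i = j"
proof -
  have disjoint: "\<And>e f. e \<in> M \<Longrightarrow> f \<in> M \<Longrightarrow> e \<noteq> f \<Longrightarrow> e \<inter> f = {}"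
    using M unfolding is_matching_def by blast
  have "(THE j. {i + 1, j + 1} \<in> M) = j"
  proof (rule the_equality)
    fix j' assume e': "{i + 1, j' + 1} \<in> M"
    have "{i + 1, j' + 1} = {i + 1, j + 1}"
      using disjoint[OF e' e] by blast
    moreover have "i \<noteq> j"
      using simple_graph_edgeD(1)[OF sg] e M unfolding is_matching_def by fastforce
    ultimately show "j' = j" by (auto simp: doubleton_eq_iff)
  qed (fact e)
  then show ?thesis using e unfolding matching_perm_def by auto
qed

lemma matching_perm_unmatched: "\<nexists>j. {i + 1, j + 1} \<in> M \<Longrightarrow> matching_perm M i = i"
  unfolding matching_perm_def by auto

lemma matching_perm_involution:
  assumes sg: "simple_graph n E" and M: "is_matching E M"
  shows "matching_perm M (matching_perm M i) = i"
proof (cases "\<exists>j. {i + 1, j + 1} \<in> M")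
  case True
  then obtain j where j: "{i + 1, j + 1} \<in> M" by blast
  then have "{j + 1, i + 1} \<in> M" by (simp add: insert_commute)
  then show ?thesis using matching_perm_eqI[OF sg M] j by simp
qed (simp add: matching_perm_unmatched)

lemma matching_perm_permutes:
  assumes sg: "simple_graph n E" and M: "is_matching E M"
  shows "matching_perm M permutes {0..<n}"
proof -
  have "matching_perm M i = i" if "i \<notin> {0..<n}" for i
  proof (rule matching_perm_unmatched, rule notI)
    assume "\<exists>j. {i + 1, j + 1} \<in> M"
    then obtain j where "{i + 1, j + 1} \<in> E" using M unfolding is_matching_def by blast
    then show False using simple_graph_edgeD(3)[OF sg] that by fastforce
  qed
  then show ?thesis
    unfolding permutes_def using matching_perm_involution[OF sg M] by metis
qed

lemma edge_supported_matching_perm: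
  assumes sg: "simple_graph n E" and M: "is_matching E M"
  shows "edge_supported n E (matching_perm M)"
  unfolding edge_supported_def
proof (intro allI impI)
  fix i assume "i < n" and "matching_perm M i \<noteq> i"
  then obtain j where j: "{i + 1, j + 1} \<in> M" using matching_perm_unmatched by metis
  then show "{i + 1, matching_perm M i + 1} \<in> E"
    using matching_perm_eqI[OF sg M j] M unfolding is_matching_def by auto
qed

lemma perm_edges_matching_perm:
  assumes sg: "simple_graph n E" and M: "is_matching E M"
  shows "perm_edges n (matching_perm M) = M"
proof
  show "perm_edges n (matching_perm M) \<subseteq> M"
  proof
    fix e assume "e \<in> perm_edges n (matching_perm M)"
    then obtain i where i: "matching_perm M i \<noteq> i" "e = {i + 1, matching_perm M i + 1}"
      unfolding perm_edges_def by blast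
    then obtain j where j: "{i + 1, j + 1} \<in> M" using matching_perm_unmatched by metis
    then show "e \<in> M" using matching_perm_eqI[OF sg M j] i by simp
  qed
next
  show "M \<subseteq> perm_edges n (matching_perm M)"
  proof
    fix e assume e: "e \<in> M"
    then obtain a b where ab: "e = {a + 1, b + 1}" "a \<noteq> b" "a < n" "b < n"
      using simple_graph_edgeE[OF sg] M unfolding is_matching_def by blast
    then have "matching_perm M a = b" using matching_perm_eqI[OF sg M] e by simp
    then show "e \<in> perm_edges n (matching_perm M)" unfolding perm_edges_def using ab by auto
  qed
qed

lemma prod_pair_image:
  fixes h :: "nat set \<Rightarrow> 'a::comm_monoid_mult"
  assumes inv: "\<And>x. p (p x) = x" and fin: "finite A"
    and A: "\<And>i. i \<in> A \<Longrightarrow> p i \<noteq> i \<and> p i \<in> A"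
  shows "(\<Prod>i\<in>A. h {i + 1, p i + 1}) = (\<Prod>e\<in>(\<lambda>i. {i + 1, p i + 1}) ` A. h e * h e)"
proof -
  have fibre: "{j \<in> A. {j + 1, p j + 1} = {i + 1, p i + 1}} = {i, p i}" if "i \<in> A" for i
  proof -
    have "{j + 1, p j + 1} = {i + 1, p i + 1} \<longleftrightarrow> j = i \<or> j = p i" for j
      using inv by (auto simp: doubleton_eq_iff)
    then show ?thesis using that A by auto
  qed
  have "(\<Prod>i\<in>A. h {i + 1, p i + 1}) =
      (\<Prod>e\<in>(\<lambda>i. {i + 1, p i + 1}) ` A. \<Prod>j | j \<in> A \<and> {j + 1, p j + 1} = e. h {j + 1, p j + 1})"
    by (rule prod.image_gen[OF fin])
  also have "\<dots> = (\<Prod>e\<in>(\<lambda>i. {i + 1, p i + 1}) ` A. h e * h e)"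
  proof (rule prod.cong[OF refl])
    fix e assume "e \<in> (\<lambda>i. {i + 1, p i + 1}) ` A"
    then obtain i where i: "i \<in> A" "e = {i + 1, p i + 1}" by blast
    have "p i \<noteq> i" using A i(1) by blast
    moreover have "{p i + 1, p (p i) + 1} = {i + 1, p i + 1}" using inv by (simp add: insert_commute)
    ultimately show "(\<Prod>j | j \<in> A \<and> {j + 1, p j + 1} = e. h {j + 1, p j + 1}) = h e * h e"
      unfolding i(2) fibre[OF i(1)] by simp
  qed
  finally show ?thesis .
qed

lemma card_pair_image:
  fixes p :: "nat \<Rightarrow> nat"
  assumes "\<And>x. p (p x) = x" and "finite A" and "\<And>i. i \<in> A \<Longrightarrow> p i \<noteq> i \<and> p i \<in> A"
  shows "card A = 2 * card ((\<lambda>i. {i + 1, p i + 1}) ` A)"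
proof -
  have "(2::nat) ^ card A = 2 ^ (2 * card ((\<lambda>i. {i + 1, p i + 1}) ` A))"
    using prod_pair_image[OF assms, of "\<lambda>_. 2::nat"] by (simp add: power_mult)
  then show ?thesis by simp
qed

locale edge_supported_involution =
  fixes n :: nat and E :: "nat set set" and p :: "nat \<Rightarrow> nat"
  assumes simple: "simple_graph n E" and permutes: "p permutes {0..<n}"
    and involution: "\<And>x. p (p x) = x" and edge_supported: "edge_supported n E p"
begin

lemma moved_points_closed:
  assumes "i \<in> moved_points n p" shows "p i \<noteq> i \<and> p i \<in> moved_points n p"
proof -
  have "p i < n" using assms permutes_in_image[OF permutes, of i] by simp
  moreover have "p (p i) \<noteq> p i" using assms involution[of i] by auto
  ultimately show ?thesis using assms by simp
qed

lemma is_matching_perm_edges: "is_matching E (perm_edges n p)"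
  unfolding is_matching_def
proof (intro conjI ballI impI)
  show "perm_edges n p \<subseteq> E" using edge_supported unfolding perm_edges_def edge_supported_def by auto
next
  fix e f assume "e \<in> perm_edges n p" "f \<in> perm_edges n p" "e \<noteq> f"
  then obtain a b where "e = {a + 1, p a + 1}" "f = {b + 1, p b + 1}"
    unfolding perm_edges_def by blast
  then show "e \<inter> f = {}" using involution[of a] involution[of b] \<open>e \<noteq> f\<close> by (auto simp: doubleton_eq_iff)
qed

lemma matching_perm_perm_edges: "matching_perm (perm_edges n p) = p"
proof
  fix i show "matching_perm (perm_edges n p) i = p i"
  proof (cases "p i = i")
    case False
    then have "i < n" using permutes_not_in[OF permutes, of i] by auto
    then have "{i + 1, p i + 1} \<in> perm_edges n p" using False unfolding perm_edges_def by auto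
    then show ?thesis by (rule matching_perm_eqI[OF simple is_matching_perm_edges])
  next
    case True
    have "\<nexists>j. {i + 1, j + 1} \<in> perm_edges n p"
    proof
      assume "\<exists>j. {i + 1, j + 1} \<in> perm_edges n p"
      then obtain j k where k: "p k \<noteq> k" "{i + 1, j + 1} = {k + 1, p k + 1}"
        unfolding perm_edges_def by blast
      then have "i = k \<or> i = p k" by (auto simp: doubleton_eq_iff)
      then show False using k True involution by auto
    qed
    then show ?thesis using True by (simp add: matching_perm_unmatched)
  qed
qed

lemma uncovered_perm_edges: "{1..n} - \<Union>(perm_edges n p) = Suc ` {i. i < n \<and> p i = i}"
proof (intro equalityI subsetI)
  fix v assume v: "v \<in> {1..n} - \<Union>(perm_edges n p)"
  have "p (v - 1) = v - 1"
  proof (rule ccontr)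
    assume "p (v - 1) \<noteq> v - 1"
    moreover have "v - 1 < n" and "v = v - 1 + 1" using v by auto
    ultimately have "v \<in> \<Union>(perm_edges n p)" unfolding perm_edges_def by blast
    then show False using v by blast
  qed
  then show "v \<in> Suc ` {i. i < n \<and> p i = i}" using v by (auto intro!: image_eqI[of _ _ "v - 1"])
next
  fix v assume "v \<in> Suc ` {i. i < n \<and> p i = i}"
  then obtain i where i: "v = Suc i" "i < n" "p i = i" by blast
  have "v \<notin> {k + 1, p k + 1}" if "p k \<noteq> k" for k using i that involution[of k] by auto
  then show "v \<in> {1..n} - \<Union>(perm_edges n p)" using i unfolding perm_edges_def by auto
qed

lemma leibniz_term_eq_matching_term:
  "leibniz_term n E w w1 p = matching_term n w w1 (perm_edges n p)"
proof -
  have "finite (moved_points n p)" by simp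
  note pairs = involution this moved_points_closed
  have edges: "perm_edges n p = (\<lambda>i. {i + 1, p i + 1}) ` moved_points n p"
    unfolding perm_edges_def ..
  have card: "card (moved_points n p) = 2 * card (perm_edges n p)"
    unfolding edges by (rule card_pair_image[OF pairs])
  have "(\<Prod>i\<in>moved_points n p. w {i + 1, p i + 1}) = (\<Prod>e\<in>perm_edges n p. w e) ^ 2"
    unfolding edges by (simp only: prod_pair_image[OF pairs] power2_eq_square prod.distrib)
  moreover have "sign p = (-1) ^ card (perm_edges n p)"
  proof -
    have "{x. p x \<noteq> x} = moved_points n p" using permutes_not_in[OF permutes] by fastforce
    then show ?thesis using sign_involution[of p] involution card by simp
  qed
  moreover have "(\<Prod>v\<in>{1..n} - \<Union>(perm_edges n p). [:-w1 v, 1:]) =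
      (\<Prod>i | i < n \<and> p i = i. [:-w1 (i + 1), 1:])"
    unfolding uncovered_perm_edges by (subst prod.reindex) auto
  ultimately show ?thesis
    unfolding leibniz_term_edge_supported[OF edge_supported] matching_term_def prod_uminus card
    by (simp add: power_mult)
qed

end

lemma eta_poly_eq_sum_involutions:
  assumes sg: "simple_graph n E"
  shows "eta_poly n E w w1 = (\<Sum>p | p permutes {0..<n} \<and> (\<forall>x. p (p x) = x). leibniz_term n E w w1 p)"
proof -
  define I where "I = {p. p permutes {0..<n} \<and> (\<forall>x. p (p x) = x) \<and> edge_supported n E p}"
  have I: "edge_supported_involution n E p" if "p \<in> I" for p
    using that sg unfolding I_def by unfold_locales auto
  have fin: "finite {p. p permutes {0..<n} \<and> (\<forall>x. p (p x) = x)}"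
    by (rule finite_subset[OF _ finite_permutations[of "{0..<n}"]]) auto
  have "(\<Sum>p | p permutes {0..<n} \<and> (\<forall>x. p (p x) = x). leibniz_term n E w w1 p) =
      (\<Sum>p\<in>I. leibniz_term n E w w1 p)"
    by (rule sum.mono_neutral_right[OF fin]) (auto simp: I_def leibniz_term_eq_0)
  also have "\<dots> = (\<Sum>p\<in>I. matching_term n w w1 (perm_edges n p))"
    by (intro sum.cong refl edge_supported_involution.leibniz_term_eq_matching_term I)
  also have "\<dots> = (\<Sum>M | is_matching E M. matching_term n w w1 M)"
  proof (rule sum.reindex_bij_betw)
    show "bij_betw (perm_edges n) I {M. is_matching E M}"
    proof (rule bij_betw_byWitness[where f' = matching_perm])
      show "\<forall>p\<in>I. matching_perm (perm_edges n p) = p"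
        using edge_supported_involution.matching_perm_perm_edges I by blast
      show "\<forall>M\<in>{M. is_matching E M}. perm_edges n (matching_perm M) = M"
        using perm_edges_matching_perm[OF sg] by blast
      show "perm_edges n ` I \<subseteq> {M. is_matching E M}"
        using edge_supported_involution.is_matching_perm_edges I by blast
      show "matching_perm ` {M. is_matching E M} \<subseteq> I"
        using matching_perm_permutes[OF sg] matching_perm_involution[OF sg]
          edge_supported_matching_perm[OF sg] by (auto simp: I_def)
    qed
  qed
  finally show ?thesis unfolding eta_poly_eq_sum_matchings[OF sg] by simp
qed

lemma phi_minus_eta_eq_sum_non_involutions:
  assumes "simple_graph n E"
  shows "phi_poly n E w w1 - eta_poly n E w w1 =
    (\<Sum>p | p permutes {0..<n} \<and> \<not> (\<forall>x. p (p x) = x). leibniz_term n E w w1 p)"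
proof -
  define I where "I = {p. p permutes {0..<n} \<and> (\<forall>x. p (p x) = x)}"
  define N where "N = {p. p permutes {0..<n} \<and> \<not> (\<forall>x. p (p x) = x)}"
  have "finite (I \<union> N)"
    by (rule finite_subset[OF _ finite_permutations[of "{0..<n}"]]) (auto simp: I_def N_def)
  then have "sum (leibniz_term n E w w1) (I \<union> N) =
      sum (leibniz_term n E w w1) I + sum (leibniz_term n E w w1) N"
    by (intro sum.union_disjoint) (auto simp: I_def N_def)
  moreover have "I \<union> N = {p. p permutes {0..<n}}" by (auto simp: I_def N_def)
  ultimately show ?thesis
    unfolding phi_poly_eq_sum_leibniz eta_poly_eq_sum_involutions[OF assms] I_def N_def by simp
qed

lemma is_cycle_map_Suc_iff:
  "is_cycle n E (map Suc cs) \<longleftrightarrow> 3 \<le> length cs \<and> distinct cs \<and> set cs \<subseteq> {..<n} \<and>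
     (\<forall>k < length cs. {Suc (cs ! k), Suc (cs ! (Suc k mod length cs))} \<in> E)"
proof -
  have "Suc k mod length cs < length cs" if "k < length cs" for k
    using that by (intro mod_less_divisor) linarith
  then show ?thesis unfolding is_cycle_def by (auto simp: distinct_map Suc_le_eq)
qed

lemma is_cycle_eq_map_Suc:
  assumes "is_cycle n E vs" shows "vs = map Suc (map (\<lambda>v. v - 1) vs)"
  using assms unfolding is_cycle_def by (auto intro!: map_idI[symmetric])

lemma is_cycle_of_succ_list:
  assumes dist: "distinct cs" and len: "3 \<le> length cs" and sub: "set cs \<subseteq> {..<n}"
    and succ: "\<And>k. k < length cs \<Longrightarrow> p (cs ! k) = cs ! (Suc k mod length cs)"
    and es: "edge_supported n E p"
  shows "is_cycle n E (map Suc cs)"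
  unfolding is_cycle_map_Suc_iff
proof (intro conjI allI impI)
  fix k assume k: "k < length cs"
  have "p (cs ! k) \<noteq> cs ! k" using cyclic_succ_not_fixed[OF dist _ succ] len k by simp
  moreover have "cs ! k < n" using sub k nth_mem by blast
  ultimately show "{Suc (cs ! k), Suc (cs ! (Suc k mod length cs))} \<in> E"
    using es succ[OF k] unfolding edge_supported_def by auto
qed (use dist len sub in auto)

lemma
  assumes pp: "p permutes {0..<n}" and es: "edge_supported n E p" and np: "p (p i) \<noteq> i"
  shows is_cycle_support: "is_cycle n E (map Suc (support p i))"
    and support_subset_moved_points: "set (support p i) \<subseteq> moved_points n p"
proof -
  have perm: "permutation p" by (rule permutes_imp_permutation[OF _ pp]) simp
  note dist = cycle_of_permutation[OF perm, of i] and len = length_support_ge_3[OF perm np]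
    and succ = support_nth_succ[OF perm]
  have "p x \<noteq> x" if "x \<in> set (support p i)" for x
    using cyclic_succ_not_fixed[OF dist _ succ that] len by simp
  moreover have "x < n" if "p x \<noteq> x" for x using permutes_not_in[OF pp, of x] that by auto
  ultimately show sub: "set (support p i) \<subseteq> moved_points n p" by blast
  show "is_cycle n E (map Suc (support p i))"
    by (rule is_cycle_of_succ_list[OF dist len _ succ es]) (use sub in auto)
qed

lemma phi_eq_eta_if_forest:
  assumes sg: "simple_graph n E" and forest: "is_forest n E"
  shows "phi_poly n E w w1 = eta_poly n E w w1"
proof -
  have "leibniz_term n E w w1 p = 0" if "p permutes {0..<n}" and "p (p i) \<noteq> i" for p i
  proof (rule leibniz_term_eq_0, rule notI)
    assume "edge_supported n E p"
    from is_cycle_support[OF that(1) this that(2)] forest show False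
      unfolding is_forest_def by blast
  qed
  then have "(\<Sum>p | p permutes {0..<n} \<and> \<not> (\<forall>x. p (p x) = x). leibniz_term n E w w1 p) = 0"
    by (intro sum.neutral) blast
  then show ?thesis using phi_minus_eta_eq_sum_non_involutions[OF sg, of w w1] by simp
qed

lemma
  assumes "is_cycle n E (map Suc cs)"
  shows cycle_of_list_permutes: "cycle_of_list cs permutes {0..<n}"
    and edge_supported_cycle_of_list: "edge_supported n E (cycle_of_list cs)"
    and cycle_of_list_not_involution: "\<not> (\<forall>x. cycle_of_list cs (cycle_of_list cs x) = x)"
    and moved_points_cycle_of_list: "moved_points n (cycle_of_list cs) = set cs"
proof -
  from assms have len: "3 \<le> length cs" and dist: "distinct cs" and sub: "set cs \<subseteq> {..<n}"
    and edges: "\<And>k. k < length cs \<Longrightarrow> {Suc (cs ! k), Suc (cs ! (Suc k mod length cs))} \<in> E"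
    unfolding is_cycle_map_Suc_iff by auto
  note succ = cycle_of_list_nth[OF dist]
  show "cycle_of_list cs permutes {0..<n}"
    by (rule permutes_subset[OF cycle_permutes]) (use sub in auto)
  have "cycle_of_list cs x \<noteq> x" if "x \<in> set cs" for x
    using cyclic_succ_not_fixed[OF dist _ succ that] len by simp
  then show "moved_points n (cycle_of_list cs) = set cs"
    using sub id_outside_supp[of _ cs] by fastforce
  show "edge_supported n E (cycle_of_list cs)"
    unfolding edge_supported_def
  proof (intro allI impI)
    fix i assume "cycle_of_list cs i \<noteq> i"
    then obtain k where "k < length cs" and "i = cs ! k"
      using id_outside_supp by (metis in_set_conv_nth)
    then show "{i + 1, cycle_of_list cs i + 1} \<in> E" using edges succ by simp
  qed
  have nonempty: "cs \<noteq> []" using len by auto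
  then have "cycle_of_list cs (cs ! 0) = cs ! 1" using succ[of 0] len by simp
  moreover have "cycle_of_list cs (cs ! 1) = cs ! 2" using succ[of 1] len by (simp add: numeral_2_eq_2)
  ultimately have "cycle_of_list cs (cycle_of_list cs (cs ! 0)) = cs ! 2" by simp
  moreover have "cs ! 2 \<noteq> cs ! 0" using nth_eq_iff_index_eq[OF dist, of 2 0] len nonempty by simp
  ultimately show "\<not> (\<forall>x. cycle_of_list cs (cycle_of_list cs x) = x)" by metis
qed

section \<open>The coefficient at the girth\<close>

definition girth :: "nat \<Rightarrow> nat set set \<Rightarrow> nat"
  where "girth n E = (LEAST k. \<exists>vs. is_cycle n E vs \<and> length vs = k)"

lemma girth_le: "is_cycle n E vs \<Longrightarrow> girth n E \<le> length vs"
  unfolding girth_def by (rule Least_le) blast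

lemma girth_cycle_exists:
  assumes "\<not> is_forest n E"
  obtains vs where "is_cycle n E vs" and "length vs = girth n E"
  using LeastI_ex[of "\<lambda>k. \<exists>vs. is_cycle n E vs \<and> length vs = k"] assms
  unfolding is_forest_def girth_def by blast

lemma coeff_leibniz_term_girth:
  assumes pp: "p permutes {0..<n}" and es: "edge_supported n E p"
    and not_involution: "\<not> (\<forall>x. p (p x) = x)"
  shows "coeff (leibniz_term n E w w1 p) (n - girth n E) =
    (if card (moved_points n p) = girth n E then - (\<Prod>x\<in>moved_points n p. w {x + 1, p x + 1}) else 0)"
proof -
  define g where "g = girth n E"
  define F where "F = {i. i < n \<and> p i = i}"
  define c where "c = of_int (sign p) * (\<Prod>x\<in>moved_points n p. - w {x + 1, p x + 1})"
  obtain i where np: "p (p i) \<noteq> i" using not_involution by blast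
  have perm: "permutation p" by (rule permutes_imp_permutation[OF _ pp]) simp
  note dist = cycle_of_permutation[OF perm, of i] and sub = support_subset_moved_points[OF pp es np]
  have expand: "leibniz_term n E w w1 p = Polynomial.smult c (\<Prod>x\<in>F. [:-w1 (x + 1), 1:])"
    unfolding leibniz_term_edge_supported[OF es] c_def F_def ..
  have "card F + card (moved_points n p) = card (F \<union> moved_points n p)"
    by (rule card_Un_disjoint[symmetric]) (auto simp: F_def)
  also have "F \<union> moved_points n p = {0..<n}" by (auto simp: F_def)
  finally have card_F: "card F + card (moved_points n p) = n" by simp
  have finite_F: "finite F" by (simp add: F_def)
  have g_le_support: "g \<le> length (support p i)"
    unfolding g_def using girth_le[OF is_cycle_support[OF pp es np]] by simp
  have finite_moved: "finite (moved_points n p)" by simp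
  have support_le: "length (support p i) \<le> card (moved_points n p)"
    using card_mono[OF finite_moved sub] distinct_card[OF dist] by simp
  show ?thesis
  proof (cases "card (moved_points n p) = g")
    case False
    then have "degree (\<Prod>x\<in>F. [:-w1 (x + 1), 1:]) < n - g"
      using g_le_support support_le card_F degree_prod_linear[OF finite_F, of "\<lambda>x. - w1 (x + 1)"]
      by simp
    then show ?thesis using False unfolding expand g_def by (simp add: coeff_eq_0)
  next
    case True
    have len: "length (support p i) = g" using g_le_support support_le True by simp
    have "set (support p i) = moved_points n p"
      by (rule card_subset_eq[OF finite_moved sub]) (simp only: distinct_card[OF dist] len True)
    moreover have "{x. p x \<noteq> x} = moved_points n p" using permutes_not_in[OF pp] by fastforce
    ultimately have "sign p = (-1) ^ (g - 1)"
      using sign_single_cycle_perm[OF perm, of i] len by simp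
    moreover have "g \<ge> 1" using len length_support_ge_3[OF perm np] by simp
    ultimately have "c = - (\<Prod>x\<in>moved_points n p. w {x + 1, p x + 1})"
      unfolding c_def prod_uminus True by (cases g) (simp_all add: power_add[symmetric])
    moreover have "n - g = card F" using card_F True by simp
    ultimately show ?thesis
      using True coeff_prod_linear_card[OF finite_F, of "\<lambda>x. - w1 (x + 1)"]
      unfolding expand g_def by simp
  qed
qed

lemma phi_ne_eta_if_not_forest:
  assumes sg: "simple_graph n E" and pos: "\<forall>e\<in>E. w e > 0" and cyclic: "\<not> is_forest n E"
  shows "phi_poly n E w w1 \<noteq> eta_poly n E w w1"
proof -
  obtain vs where vs: "is_cycle n E vs" "length vs = girth n E"
    using girth_cycle_exists[OF cyclic] .
  define cs where "cs = map (\<lambda>v. v - 1) vs"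
  have cycle: "is_cycle n E (map Suc cs)" using vs(1) is_cycle_eq_map_Suc unfolding cs_def by simp
  define N where "N = {p. p permutes {0..<n} \<and> \<not> (\<forall>x. p (p x) = x)}"
  define f where "f p = coeff (leibniz_term n E w w1 p) (n - girth n E)" for p
  have weight_pos: "(\<Prod>x\<in>moved_points n p. w {x + 1, p x + 1}) > 0" if "edge_supported n E p" for p
    using that pos unfolding edge_supported_def by (intro prod_pos) auto
  have "- f p \<ge> 0" if "p \<in> N" for p
  proof (cases "edge_supported n E p")
    case True
    then show ?thesis using that weight_pos[OF True] coeff_leibniz_term_girth[OF _ True]
      unfolding f_def N_def by simp
  qed (simp add: f_def leibniz_term_eq_0)
  moreover have "cycle_of_list cs \<in> N"
    using cycle_of_list_permutes[OF cycle] cycle_of_list_not_involution[OF cycle] by (simp add: N_def)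
  moreover have "- f (cycle_of_list cs) > 0"
  proof -
    have "card (moved_points n (cycle_of_list cs)) = girth n E"
      using moved_points_cycle_of_list[OF cycle] distinct_card[of cs] cycle vs(2)
      unfolding is_cycle_map_Suc_iff by (simp add: cs_def)
    then show ?thesis
      using weight_pos[OF edge_supported_cycle_of_list[OF cycle]] unfolding f_def
      by (simp add: coeff_leibniz_term_girth[OF cycle_of_list_permutes[OF cycle]
            edge_supported_cycle_of_list[OF cycle] cycle_of_list_not_involution[OF cycle]])
  qed
  moreover have "finite N"
    by (rule finite_subset[OF _ finite_permutations[of "{0..<n}"]]) (auto simp: N_def)
  ultimately have "sum f N < 0" using sum_pos2[of N _ "\<lambda>p. - f p"] by (simp add: sum_negf)
  moreover have "sum f N = coeff (phi_poly n E w w1 - eta_poly n E w w1) (n - girth n E)"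
    unfolding phi_minus_eta_eq_sum_non_involutions[OF sg] f_def N_def by (simp add: coeff_sum)
  ultimately show ?thesis by auto
qed

theorem corollary2p10:
  fixes n :: nat and E :: "nat set set" and w :: "nat set \<Rightarrow> real" and w1 :: "nat \<Rightarrow> real"
  assumes "simple_graph n E"
    and "\<forall>e\<in>E. w e > 0"
  shows "is_forest n E \<longleftrightarrow> phi_poly n E w w1 = eta_poly n E w w1"
  using phi_eq_eta_if_forest[OF assms(1)] phi_ne_eta_if_not_forest[OF assms] by blast

end
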